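(* Consider the following algorithm (SeqPolyPA) for polynomial preferential attachment with exponent $\alpha>0$ and one host per new node. It maintains a list $P$ (the proposal list) of nodes, in which a node may occur several times; for a node $v$ let $c(v)$ be the number of occurrences of $v$ in $P$ and $w(v)=\deg(v)^\alpha/c(v)$. Initially $P$ contains each seed node $v$ exactly $\lceil \deg_0(v)^\alpha n_0/W_0\rceil$ times. To attach the $i$-th new node $v_{n_0+i}$ to the current graph $G_{i-1}$, the algorithm repeatedly selects a candidate $h$ uniformly at random among the positions of $P$ and accepts it with probability $w(h)/\max_{v\in V_{i-1}} w(v)$ (all quantities taken with respect to $G_{i-1}$ and the current $P$), until a candidate is accepted. Then it adds $v_{n_0+i}$ and the edge $\{v_{n_0+i},h\}$ to the graph, appends $v_{n_0+i}$ once to $P$, and afterwards appends $h$ to $P$ repeatedly as long as $w(h)>W_i/n_i$ (with respect to $G_i$). Then, in every step, SeqPolyPA selects each node $h$ of the current graph $G$ as host with probability $\deg(h)^\alpha/W$, where $W=\sum_{v\in V(G)}\deg(v)^\alpha$.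
   Context: Preferential attachment model: start from a seed graph $G_0=(V_0,E_0)$ with $n_0$ nodes and $m_0$ edges; iteratively add $N$ new nodes $v_{n_0+1},\dots,v_{n_0+N}$, each connected to earlier nodes ("hosts"); here each new node receives one host. $G_i=(V_i,E_i)$ denotes the graph after $i$ new nodes were added, $n_i=n_0+i$, $\deg_i(v)$ is the degree of $v$ in $G_i$, and $W_i=\sum_{v\in V_i}\deg_i(v)^\alpha$ (assumed positive). In polynomial preferential attachment the host $h$ is chosen with probability proportional to $\deg(h)^\alpha$. *)

theory Defs
  imports Complex_Main
begin

text \<open>Graphs: nodes are 0,...,n-1 (node n is the next new node); edges are
  2-element sets of nodes. The proposal list P is a list of nodes.\<close>

definition degE :: "nat set set \<Rightarrow> nat \<Rightarrow> nat" where
  "degE E v = card {e \<in> E. v \<in> e}"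

definition Wt :: "real \<Rightarrow> nat \<Rightarrow> nat set set \<Rightarrow> real" where
  "Wt \<alpha> n E = (\<Sum>v<n. real (degE E v) powr \<alpha>)"

definition wgt :: "real \<Rightarrow> nat set set \<Rightarrow> nat list \<Rightarrow> nat \<Rightarrow> real" where
  "wgt \<alpha> E P v = real (degE E v) powr \<alpha> / real (count_list P v)"

definition wmax :: "real \<Rightarrow> nat \<Rightarrow> nat set set \<Rightarrow> nat list \<Rightarrow> real" where
  "wmax \<alpha> n E P = Max (wgt \<alpha> E P ` {..<n})"

text \<open>Probability that a single trial of the rejection loop draws a position of P
  holding h (uniformly among the positions) and accepts it.\<close>
definition trial_acc :: "real \<Rightarrow> nat \<Rightarrow> nat set set \<Rightarrow> nat list \<Rightarrow> nat \<Rightarrow> real" where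
  "trial_acc \<alpha> n E P h =
     (real (count_list P h) / real (length P)) * (wgt \<alpha> E P h / wmax \<alpha> n E P)"

definition acc_total :: "real \<Rightarrow> nat \<Rightarrow> nat set set \<Rightarrow> nat list \<Rightarrow> real" where
  "acc_total \<alpha> n E P = (\<Sum>h\<in>set P. trial_acc \<alpha> n E P h)"

text \<open>Probability that the repeat-until-accepted loop returns h: the first k trials
  reject and trial k+1 selects and accepts h, summed over k.\<close>
definition host_prob :: "real \<Rightarrow> nat \<Rightarrow> nat set set \<Rightarrow> nat list \<Rightarrow> nat \<Rightarrow> real" where
  "host_prob \<alpha> n E P h =
     (\<Sum>k. (1 - acc_total \<alpha> n E P) ^ k * trial_acc \<alpha> n E P h)"

definition new_edges :: "nat \<Rightarrow> nat set set \<Rightarrow> nat \<Rightarrow> nat set set" where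
  "new_edges n E h = insert {n, h} E"

definition extra_copies :: "real \<Rightarrow> nat \<Rightarrow> nat set set \<Rightarrow> nat list \<Rightarrow> nat \<Rightarrow> nat" where
  "extra_copies \<alpha> n E P h =
     (LEAST k. \<not> (wgt \<alpha> (new_edges n E h) (P @ [n] @ replicate k h) h
                  > Wt \<alpha> (Suc n) (new_edges n E h) / real (Suc n)))"

definition new_P :: "real \<Rightarrow> nat \<Rightarrow> nat set set \<Rightarrow> nat list \<Rightarrow> nat \<Rightarrow> nat list" where
  "new_P \<alpha> n E P h = P @ [n] @ replicate (extra_copies \<alpha> n E P h) h"

text \<open>States (n, E, P) reachable by SeqPolyPA from the seed graph ({0..<n0}, E0):
  initially each seed node v occurs exactly ceil(deg_0(v)^alpha n0 / W_0) times in P;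
  in a step, a host h that the loop returns with positive probability is used.\<close>
inductive reachable :: "real \<Rightarrow> nat \<Rightarrow> nat set set \<Rightarrow> nat \<Rightarrow> nat set set \<Rightarrow> nat list \<Rightarrow> bool"
  for \<alpha> :: real and n0 :: nat and E0 :: "nat set set" where
  init: "set P \<subseteq> {..<n0} \<Longrightarrow>
         (\<forall>v<n0. count_list P v =
             nat \<lceil>real (degE E0 v) powr \<alpha> * real n0 / Wt \<alpha> n0 E0\<rceil>) \<Longrightarrow>
         reachable \<alpha> n0 E0 n0 E0 P"
| step: "reachable \<alpha> n0 E0 n E P \<Longrightarrow> h < n \<Longrightarrow> trial_acc \<alpha> n E P h > 0 \<Longrightarrow>
         reachable \<alpha> n0 E0 (Suc n) (new_edges n E h) (new_P \<alpha> n E P h)"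

end

theory Submission
  imports Defs
begin

text \<open>A single trial draws h with probability c(h)/|P| and accepts it with probability
  w(h)/max w, so it returns h with probability deg(h)^\<alpha> / (|P| max w) whenever h occurs
  in P. Along every run of the algorithm each node of positive degree occurs in P, so one
  trial accepts with total probability W/(|P| max w), which lies in (0,1] because
  W = \<Sum>c(v) w(v). Summing the geometric series over the rejected trials divides the two
  and leaves deg(h)^\<alpha>/W.\<close>

lemma geometric_retrial_sum:
  fixes a p :: real
  assumes "0 < a" "a \<le> 1"
  shows "(\<Sum>k. (1 - a) ^ k * p) = p / a"
proof -
  have "norm (1 - a) < 1" using assms by simp
  from sums_mult2[OF geometric_sums[OF this], of p] show ?thesis
    using assms by (simp add: sums_iff)
qed

definition proposal_invariant :: "real \<Rightarrow> nat \<Rightarrow> nat set set \<Rightarrow> nat list \<Rightarrow> bool" where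
  "proposal_invariant \<alpha> n E P \<longleftrightarrow> finite E \<and> set P \<subseteq> {..<n} \<and>
     (\<forall>v<n. v \<notin> set P \<longrightarrow> degE E v = 0) \<and> Wt \<alpha> n E > 0"

lemma trial_acc_eq:
  assumes "u \<in> set P \<or> degE E u = 0"
  shows "trial_acc \<alpha> n E P u = real (degE E u) powr \<alpha> / (real (length P) * wmax \<alpha> n E P)"
  using assms by (auto simp: trial_acc_def wgt_def count_list_0_iff)

lemma wgt_le_wmax: "u < n \<Longrightarrow> wgt \<alpha> E P u \<le> wmax \<alpha> n E P"
  unfolding wmax_def by (intro Max_ge) auto

lemma Wt_eq_sum_set:
  assumes "set P \<subseteq> {..<n}" "\<forall>v<n. v \<notin> set P \<longrightarrow> degE E v = 0"
  shows "Wt \<alpha> n E = (\<Sum>v\<in>set P. real (degE E v) powr \<alpha>)"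
  unfolding Wt_def by (rule sum.mono_neutral_right) (use assms in auto)

lemma Wt_le_length_mult_wmax:
  assumes "set P \<subseteq> {..<n}" "\<forall>v<n. v \<notin> set P \<longrightarrow> degE E v = 0"
  shows "Wt \<alpha> n E \<le> real (length P) * wmax \<alpha> n E P"
proof -
  have "Wt \<alpha> n E = (\<Sum>v\<in>set P. real (count_list P v) * wgt \<alpha> E P v)"
    unfolding Wt_eq_sum_set[OF assms] by (rule sum.cong) (auto simp: wgt_def count_list_0_iff)
  also have "\<dots> \<le> (\<Sum>v\<in>set P. real (count_list P v) * wmax \<alpha> n E P)"
    by (intro sum_mono mult_left_mono wgt_le_wmax) (use assms(1) in auto)
  also have "\<dots> = real (length P) * wmax \<alpha> n E P"
    by (simp flip: sum_distrib_right of_nat_sum add: sum_count_set)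
  finally show ?thesis .
qed

lemma acc_total_eq:
  assumes "set P \<subseteq> {..<n}" "\<forall>v<n. v \<notin> set P \<longrightarrow> degE E v = 0"
  shows "acc_total \<alpha> n E P = Wt \<alpha> n E / (real (length P) * wmax \<alpha> n E P)"
  unfolding acc_total_def Wt_eq_sum_set[OF assms] sum_divide_distrib
  by (rule sum.cong) (simp_all add: trial_acc_eq)

lemma host_prob_proposal_invariant:
  assumes inv: "proposal_invariant \<alpha> n E P" and "h < n"
  shows "host_prob \<alpha> n E P h = real (degE E h) powr \<alpha> / Wt \<alpha> n E"
proof -
  define M where "M = real (length P) * wmax \<alpha> n E P"
  have setP: "set P \<subseteq> {..<n}" and supp: "\<forall>v<n. v \<notin> set P \<longrightarrow> degE E v = 0"
    and W_pos: "Wt \<alpha> n E > 0"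
    using inv unfolding proposal_invariant_def by auto
  have W_le: "Wt \<alpha> n E \<le> M"
    unfolding M_def using setP supp by (rule Wt_le_length_mult_wmax)
  have acc: "acc_total \<alpha> n E P = Wt \<alpha> n E / M"
    unfolding M_def using setP supp by (rule acc_total_eq)
  have "host_prob \<alpha> n E P h = trial_acc \<alpha> n E P h / acc_total \<alpha> n E P"
    unfolding host_prob_def using W_pos W_le by (intro geometric_retrial_sum) (simp_all add: acc)
  also have "\<dots> = real (degE E h) powr \<alpha> / M / (Wt \<alpha> n E / M)"
    unfolding acc M_def using supp \<open>h < n\<close> by (subst trial_acc_eq) auto
  also have "\<dots> = real (degE E h) powr \<alpha> / Wt \<alpha> n E"
    using W_pos W_le by simp
  finally show ?thesis .
qed

lemma proposal_invariant_init:
  assumes "finite E0" and W_pos: "Wt \<alpha> n0 E0 > 0" and "set P \<subseteq> {..<n0}"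
    and count: "\<forall>v<n0. count_list P v =
             nat \<lceil>real (degE E0 v) powr \<alpha> * real n0 / Wt \<alpha> n0 E0\<rceil>"
  shows "proposal_invariant \<alpha> n0 E0 P"
proof -
  have "degE E0 v = 0" if "v < n0" "v \<notin> set P" for v
  proof -
    have "real (degE E0 v) powr \<alpha> * real n0 / Wt \<alpha> n0 E0 \<le> 0"
      using count[rule_format, OF \<open>v < n0\<close>] \<open>v \<notin> set P\<close> by simp
    hence "real (degE E0 v) powr \<alpha> \<le> 0"
      using W_pos \<open>v < n0\<close> by (simp add: divide_le_0_iff mult_le_0_iff)
    thus ?thesis by simp
  qed
  thus ?thesis using assms unfolding proposal_invariant_def by auto
qed

text \<open>Any number k of appended host copies works, so the LEAST in extra_copies never needs
  to be analysed: h already occurs in P.\<close>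
lemma proposal_invariant_step:
  assumes inv: "proposal_invariant \<alpha> n E P" and "h \<in> set P"
  shows "proposal_invariant \<alpha> (Suc n) (new_edges n E h) (P @ [n] @ replicate k h)"
proof -
  let ?E = "new_edges n E h" and ?P = "P @ [n] @ replicate k h"
  have fin: "finite ?E" and setP: "set ?P \<subseteq> {..<Suc n}"
    using inv \<open>h \<in> set P\<close> unfolding proposal_invariant_def new_edges_def by auto
  have supp: "degE ?E v = 0" if "v < Suc n" "v \<notin> set ?P" for v
  proof -
    have "{e \<in> ?E. v \<in> e} = {e \<in> E. v \<in> e}"
      using that \<open>h \<in> set P\<close> unfolding new_edges_def by auto
    thus ?thesis using inv that unfolding proposal_invariant_def degE_def by auto
  qed
  have "{n, h} \<in> {e \<in> ?E. n \<in> e}" unfolding new_edges_def by simp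
  hence "degE ?E n \<noteq> 0" using fin unfolding degE_def by auto
  hence "0 < real (degE ?E n) powr \<alpha>" by simp
  also have "\<dots> \<le> Wt \<alpha> (Suc n) ?E"
    unfolding Wt_def by (rule member_le_sum) auto
  finally show ?thesis using fin setP supp unfolding proposal_invariant_def by blast
qed

lemma reachable_proposal_invariant:
  assumes "finite E0" "Wt \<alpha> n0 E0 > 0" "reachable \<alpha> n0 E0 n E P"
  shows "proposal_invariant \<alpha> n E P"
  using assms(3)
proof induction
  case (init P)
  show ?case by (rule proposal_invariant_init[OF assms(1,2) init])
next
  case (step n E P h)
  have "h \<in> set P"
    using \<open>trial_acc \<alpha> n E P h > 0\<close> by (cases "h \<in> set P") (simp_all add: trial_acc_def)
  then show ?case
    unfolding new_P_def by (rule proposal_invariant_step[OF step.IH])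
qed

theorem theorem1:
  fixes \<alpha> :: real and n0 :: nat and E0 :: "nat set set"
    and n :: nat and E :: "nat set set" and P :: "nat list" and h :: nat
  assumes "\<alpha> > 0"
    and "finite E0"
    and "\<forall>e\<in>E0. e \<subseteq> {..<n0} \<and> card e = 2"
    and "Wt \<alpha> n0 E0 > 0"
    and "reachable \<alpha> n0 E0 n E P"
    and "h < n"
  shows "host_prob \<alpha> n E P h = real (degE E h) powr \<alpha> / Wt \<alpha> n E"
proof -
  have "proposal_invariant \<alpha> n E P"
    using assms(2,4,5) by (rule reachable_proposal_invariant)
  then show ?thesis using \<open>h < n\<close> by (rule host_prob_proposal_invariant)
qed

end
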